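(* In the setting of the previous statement (unitary $V$, $D=c_1I+c_2V$ with real $c_1,c_2$, unitary Arnoldi quantities $Q_k,L_k,U_k,l_{k+1,k}$, $T_k=c_1U_k+c_2L_k$ with nonsingular LU factorization, $z_k$ solving $T_kz_k=\|b\|_2e_1$, $\alpha_k=e_k^Tz_k$, and $x_k=Q_kU_kz_k$), let $\nu=c_2l_{k+1,k}$ and let $\tilde T_k$ be the $(k+1)\times k$ matrix obtained by appending the row $\nu e_k^T$ to $T_k$. Let $O_k$ be a $(k+1)\times(k+1)$ unitary matrix of the form $O_k=G_k\begin{pmatrix}O_{k-1}&0\\0&1\end{pmatrix}$ (with $O_0=1$), where $G_k$ acts as the identity on the first $k-1$ coordinates and as $\begin{pmatrix}c_k&s_k\\-\bar s_k&c_k\end{pmatrix}$ (with $c_k\ge0$ real, $c_k^2+|s_k|^2=1$) on coordinates $k,k+1$, chosen so that $O_k\tilde T_k=\begin{pmatrix}R_k\\0\end{pmatrix}$ with $R_k$ upper triangular; assume $R_k$ is nonsingular. Then the minimizer $$\tilde x_k=\arg\min_{x\in\mathrm{span}\{b,Db,\dots,D^{k-1}b\}}\|b-Dx\|_2$$ is given by $$\tilde x_k=x_k-\nu\alpha_ks_k\,Q_kU_kR_k^{-1}e_k .$$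
   Context: Unitary Arnoldi process: $q_1=b/\|b\|_2$, $q_0=0$, $v_0=0$, $u_{01}=0$; for $j=1,2,\dots$: $v_j=Vq_j$, $u_{j-1,j}=-(q_{j-1}^*v_j)/(q_{j-1}^*v_{j-1})$ for $j>1$, $l_{jj}=q_j^*v_j+u_{j-1,j}q_j^*v_{j-1}$, $\tilde q_{j+1}=v_j-l_{jj}q_j+u_{j-1,j}v_{j-1}$, $l_{j+1,j}=\|\tilde q_{j+1}\|_2$, $q_{j+1}=\tilde q_{j+1}/l_{j+1,j}$, assumed without breakdown. $Q_k=[q_1,\dots,q_k]$ (orthonormal columns); $L_k$ is $k\times k$ lower bidiagonal with diagonal $l_{jj}$ and subdiagonal $l_{j+1,j}$; $U_k$ is $k\times k$ upper bidiagonal with unit diagonal and superdiagonal $u_{j-1,j}$; $VQ_kU_k=Q_kL_k+l_{k+1,k}q_{k+1}e_k^T$. $e_j$ is the $j$-th standard unit vector. *)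

theory Defs
  imports "Jordan_Normal_Form.Schur_Decomposition" "Jordan_Normal_Form.Gauss_Jordan_Elimination"
begin

text \<open>The paper's 1-based index j of q_j is kept for the Arnoldi
vectors (ua_q V b j = q_j, with q_0 = 0); the matrix entry of the paper at
(i,j) (1-based) is stored at (i-1,j-1).\<close>

definition cinner :: "complex vec \<Rightarrow> complex vec \<Rightarrow> complex" where
  "cinner x y = (\<Sum>i<dim_vec x. cnj (x $ i) * y $ i)"

definition vnorm :: "complex vec \<Rightarrow> real" where
  "vnorm x = sqrt (\<Sum>i<dim_vec x. (cmod (x $ i))^2)"

text \<open>One step of the unitary Arnoldi process, from qp = q_{j-1}, q = q_j
(v_j = V q_j, v_{j-1} = V q_{j-1}; note V 0 = 0 = v_0).\<close>

definition ua_u :: "complex mat \<Rightarrow> complex vec \<Rightarrow> complex vec \<Rightarrow> complex" where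
  "ua_u V qp q = - (cinner qp (V *\<^sub>v q)) / (cinner qp (V *\<^sub>v qp))"

definition ua_l :: "complex mat \<Rightarrow> complex vec \<Rightarrow> complex vec \<Rightarrow> complex" where
  "ua_l V qp q = cinner q (V *\<^sub>v q) + ua_u V qp q * cinner q (V *\<^sub>v qp)"

definition ua_qt :: "complex mat \<Rightarrow> complex vec \<Rightarrow> complex vec \<Rightarrow> complex vec" where
  "ua_qt V qp q = V *\<^sub>v q - ua_l V qp q \<cdot>\<^sub>v q + ua_u V qp q \<cdot>\<^sub>v (V *\<^sub>v qp)"

fun ua_q :: "complex mat \<Rightarrow> complex vec \<Rightarrow> nat \<Rightarrow> complex vec" where
  "ua_q V b 0 = 0\<^sub>v (dim_vec b)"
| "ua_q V b (Suc 0) = complex_of_real (1 / vnorm b) \<cdot>\<^sub>v b"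
| "ua_q V b (Suc (Suc j)) =
     complex_of_real (1 / vnorm (ua_qt V (ua_q V b j) (ua_q V b (Suc j))))
       \<cdot>\<^sub>v ua_qt V (ua_q V b j) (ua_q V b (Suc j))"

text \<open>Paper-indexed scalars (j \<ge> 1):
  ua_usup V b j = u_{j-1,j}, ua_ldiag V b j = l_{jj}, ua_lsub V b j = l_{j+1,j}.\<close>

definition ua_usup :: "complex mat \<Rightarrow> complex vec \<Rightarrow> nat \<Rightarrow> complex" where
  "ua_usup V b j = ua_u V (ua_q V b (j - 1)) (ua_q V b j)"

definition ua_ldiag :: "complex mat \<Rightarrow> complex vec \<Rightarrow> nat \<Rightarrow> complex" where
  "ua_ldiag V b j = ua_l V (ua_q V b (j - 1)) (ua_q V b j)"

definition ua_lsub :: "complex mat \<Rightarrow> complex vec \<Rightarrow> nat \<Rightarrow> real" where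
  "ua_lsub V b j = vnorm (ua_qt V (ua_q V b (j - 1)) (ua_q V b j))"

text \<open>No breakdown in the first k steps: all divisions are by nonzero numbers.\<close>
definition ua_no_breakdown :: "complex mat \<Rightarrow> complex vec \<Rightarrow> nat \<Rightarrow> bool" where
  "ua_no_breakdown V b k \<longleftrightarrow> vnorm b \<noteq> 0
     \<and> (\<forall>j. 1 \<le> j \<and> j \<le> k \<longrightarrow> ua_lsub V b j \<noteq> 0)
     \<and> (\<forall>j. 2 \<le> j \<and> j \<le> k \<longrightarrow> cinner (ua_q V b (j - 1)) (V *\<^sub>v ua_q V b (j - 1)) \<noteq> 0)"

definition ua_Q :: "complex mat \<Rightarrow> complex vec \<Rightarrow> nat \<Rightarrow> complex mat" where
  "ua_Q V b k = mat (dim_vec b) k (\<lambda>(i, j). ua_q V b (j + 1) $ i)"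

definition ua_L :: "complex mat \<Rightarrow> complex vec \<Rightarrow> nat \<Rightarrow> complex mat" where
  "ua_L V b k = mat k k (\<lambda>(i, j). if i = j then ua_ldiag V b (j + 1)
      else if i = j + 1 then complex_of_real (ua_lsub V b (j + 1)) else 0)"

definition ua_U :: "complex mat \<Rightarrow> complex vec \<Rightarrow> nat \<Rightarrow> complex mat" where
  "ua_U V b k = mat k k (\<lambda>(i, j). if i = j then 1
      else if j = i + 1 then ua_usup V b (j + 1) else 0)"

definition unitary_mat :: "complex mat \<Rightarrow> bool" where
  "unitary_mat A \<longleftrightarrow> A \<in> carrier_mat (dim_row A) (dim_row A) \<and> mat_adjoint A * A = 1\<^sub>m (dim_row A)"

definition has_nonsingular_LU :: "complex mat \<Rightarrow> bool" where
  "has_nonsingular_LU T \<longleftrightarrow> (\<exists>L U. L \<in> carrier_mat (dim_row T) (dim_row T)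
     \<and> U \<in> carrier_mat (dim_row T) (dim_row T)
     \<and> (\<forall>i<dim_row T. L $$ (i, i) = 1 \<and> (\<forall>j<dim_row T. i < j \<longrightarrow> L $$ (i, j) = 0))
     \<and> upper_triangular U \<and> (\<forall>i<dim_row T. U $$ (i, i) \<noteq> 0)
     \<and> T = L * U)"

definition givens_mat :: "nat \<Rightarrow> real \<Rightarrow> complex \<Rightarrow> complex mat" where
  "givens_mat j c s = mat (j + 1) (j + 1) (\<lambda>(a, b).
     if a = j - 1 \<and> b = j - 1 then complex_of_real c
     else if a = j - 1 \<and> b = j then s
     else if a = j \<and> b = j - 1 then - cnj s
     else if a = j \<and> b = j then complex_of_real c
     else if a = b then 1 else 0)"

definition krylov :: "complex mat \<Rightarrow> complex vec \<Rightarrow> nat \<Rightarrow> complex vec set" where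
  "krylov D b k = {mat (dim_vec b) k (\<lambda>(i, j). ((D ^\<^sub>m j) *\<^sub>v b) $ i) *\<^sub>v c | c. c \<in> carrier_vec k}"

end

theory Submission
  imports Defs
begin

text \<open>For unitary \<open>V\<close> the two-term recurrence orthogonalises against all earlier vectors, so
  \<open>q\<^sub>1, \<dots>, q\<^sub>k\<^sub>+\<^sub>1\<close> are orthonormal, and the recurrence is the relation
  \<open>D Q\<^sub>k U\<^sub>k = Q\<^sub>k\<^sub>+\<^sub>1 T~\<^sub>k\<close>. As \<open>U\<^sub>k\<close> is unit upper triangular, \<open>Q\<^sub>k U\<^sub>k\<close> has the range of
  \<open>Q\<^sub>k\<close>, which contains the Krylov space and equals it when \<open>c\<^sub>2 \<noteq> 0\<close> (for \<open>c\<^sub>2 = 0\<close> the Krylov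
  space is spanned by \<open>b\<close> and \<open>x\<^sub>k = b / c\<^sub>1\<close>). Since \<open>b = \<beta> Q\<^sub>k\<^sub>+\<^sub>1 e\<^sub>1\<close> with \<open>\<beta> = \<parallel>b\<parallel>\<close>, the
  residual of \<open>Q\<^sub>k U\<^sub>k w\<close> has norm \<open>\<parallel>\<beta> e\<^sub>1 - T~\<^sub>k w\<parallel> = \<parallel>O\<^sub>k (\<beta> e\<^sub>1 - T~\<^sub>k w)\<parallel>\<close>; the last row of
  \<open>O\<^sub>k T~\<^sub>k\<close> vanishes, so this is minimal exactly for \<open>w = R\<^sub>k\<^sup>-\<^sup>1 g\<close>, \<open>g\<close> being the first \<open>k\<close>
  entries of \<open>\<beta> O\<^sub>k e\<^sub>1\<close>. Finally \<open>T~\<^sub>k z\<^sub>k = \<beta> e\<^sub>1 + \<nu> \<alpha>\<^sub>k e\<^sub>k\<^sub>+\<^sub>1\<close> and the last column of \<open>O\<^sub>k\<close> is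
  \<open>s\<^sub>k e\<^sub>k + c\<^sub>k e\<^sub>k\<^sub>+\<^sub>1\<close>, so \<open>R\<^sub>k z\<^sub>k = g + \<nu> \<alpha>\<^sub>k s\<^sub>k e\<^sub>k\<close>, which yields the correction term.\<close>

section \<open>Inner products and isometries\<close>

lemma mat_adjoint_dims[simp]:
  "dim_row (mat_adjoint A) = dim_col A" "dim_col (mat_adjoint A) = dim_row A"
  unfolding mat_adjoint_def by auto

lemma index_mat_adjoint[simp]:
  "i < dim_col A \<Longrightarrow> j < dim_row A \<Longrightarrow> mat_adjoint A $$ (i, j) = cnj (A $$ (j, i))"
  unfolding mat_adjoint_def by (auto simp: mat_of_rows_def conjugate_complex_def)

lemma cinner_add_left:
  "x \<in> carrier_vec n \<Longrightarrow> y \<in> carrier_vec n \<Longrightarrow> z \<in> carrier_vec n \<Longrightarrow>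
   cinner (x + y) z = cinner x z + cinner y z"
  unfolding cinner_def by (auto simp: sum.distrib algebra_simps)

lemma cinner_add_right:
  "x \<in> carrier_vec n \<Longrightarrow> y \<in> carrier_vec n \<Longrightarrow> z \<in> carrier_vec n \<Longrightarrow>
   cinner z (x + y) = cinner z x + cinner z y"
  unfolding cinner_def by (auto simp: sum.distrib algebra_simps)

lemma cinner_minus_right:
  "x \<in> carrier_vec n \<Longrightarrow> y \<in> carrier_vec n \<Longrightarrow> z \<in> carrier_vec n \<Longrightarrow>
   cinner z (x - y) = cinner z x - cinner z y"
  unfolding cinner_def by (auto simp: sum_subtractf algebra_simps)

lemma cinner_smult_left: "cinner (a \<cdot>\<^sub>v x) z = cnj a * cinner x z"
  unfolding cinner_def by (auto simp: sum_distrib_left algebra_simps)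

lemma cinner_smult_right: "dim_vec z = dim_vec x \<Longrightarrow> cinner z (a \<cdot>\<^sub>v x) = a * cinner z x"
  unfolding cinner_def by (auto simp: sum_distrib_left algebra_simps)

lemma cinner_zero_left[simp]: "cinner (0\<^sub>v n) z = 0"
  unfolding cinner_def by auto

lemma cinner_commute: "dim_vec x = dim_vec y \<Longrightarrow> cinner y x = cnj (cinner x y)"
  unfolding cinner_def by (auto simp: algebra_simps)

lemma vnorm_nonneg: "vnorm x \<ge> 0"
  unfolding vnorm_def by (simp add: sum_nonneg)

lemma vnorm_square: "(vnorm x)\<^sup>2 = (\<Sum>i<dim_vec x. (cmod (x $ i))\<^sup>2)"
  unfolding vnorm_def by (simp add: sum_nonneg)

lemma vnorm_eq_0_iff: "vnorm x = 0 \<longleftrightarrow> x = 0\<^sub>v (dim_vec x)"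
proof -
  have "vnorm x = 0 \<longleftrightarrow> (\<forall>i<dim_vec x. x $ i = 0)"
    unfolding vnorm_def by (auto simp: sum_nonneg sum_nonneg_eq_0_iff)
  also have "\<dots> \<longleftrightarrow> x = 0\<^sub>v (dim_vec x)"
  proof
    assume x: "x = 0\<^sub>v (dim_vec x)"
    show "\<forall>i<dim_vec x. x $ i = 0"
    proof (intro allI impI)
      fix i assume "i < dim_vec x"
      then show "x $ i = 0" using arg_cong[OF x, of "\<lambda>v. v $ i"] by simp
    qed
  qed (auto intro!: eq_vecI)
  finally show ?thesis .
qed

lemma cinner_self: "cinner x x = complex_of_real ((vnorm x)\<^sup>2)"
proof -
  have "cnj (x $ i) * x $ i = complex_of_real ((cmod (x $ i))\<^sup>2)" for i
    by (metis complex_norm_square mult.commute of_real_power)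
  then show ?thesis unfolding cinner_def vnorm_square by simp
qed

lemma cinner_mult_mat_vec_left:
  assumes "A \<in> carrier_mat m p" "x \<in> carrier_vec p" "y \<in> carrier_vec m"
  shows "cinner (A *\<^sub>v x) y = cinner x (mat_adjoint A *\<^sub>v y)"
proof -
  have "cinner (A *\<^sub>v x) y = (\<Sum>i<m. \<Sum>j<p. cnj (A $$ (i, j)) * cnj (x $ j) * y $ i)"
    using assms unfolding cinner_def
    by (auto simp: scalar_prod_def sum_distrib_right atLeast0LessThan)
  also have "\<dots> = (\<Sum>j<p. \<Sum>i<m. cnj (A $$ (i, j)) * cnj (x $ j) * y $ i)"
    by (rule sum.swap)
  also have "\<dots> = cinner x (mat_adjoint A *\<^sub>v y)"
    using assms unfolding cinner_def
    by (auto simp: scalar_prod_def sum_distrib_left atLeast0LessThan algebra_simps intro!: sum.cong)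
  finally show ?thesis .
qed

lemma cinner_isometry:
  assumes A: "A \<in> carrier_mat m p" and AA: "mat_adjoint A * A = 1\<^sub>m p"
    and x: "x \<in> carrier_vec p" and y: "y \<in> carrier_vec p"
  shows "cinner (A *\<^sub>v x) (A *\<^sub>v y) = cinner x y"
proof -
  have adj: "mat_adjoint A \<in> carrier_mat p m" using A by auto
  have "cinner (A *\<^sub>v x) (A *\<^sub>v y) = cinner x (mat_adjoint A *\<^sub>v (A *\<^sub>v y))"
    using cinner_mult_mat_vec_left[OF A x] A y by simp
  also have "mat_adjoint A *\<^sub>v (A *\<^sub>v y) = (mat_adjoint A * A) *\<^sub>v y"
    using assoc_mult_mat_vec[OF adj A y] by simp
  finally show ?thesis using AA y by simp
qed

lemma vnorm_isometry:
  assumes A: "A \<in> carrier_mat m p" and AA: "mat_adjoint A * A = 1\<^sub>m p" and x: "x \<in> carrier_vec p"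
  shows "vnorm (A *\<^sub>v x) = vnorm x"
proof -
  have "(vnorm (A *\<^sub>v x))\<^sup>2 = (vnorm x)\<^sup>2"
    using cinner_isometry[OF A AA x x] unfolding cinner_self of_real_eq_iff .
  then show ?thesis using vnorm_nonneg by (meson power2_eq_iff_nonneg)
qed

section \<open>Column ranges\<close>

definition mat_range :: "'a :: field mat \<Rightarrow> 'a vec set" where
  "mat_range A = {A *\<^sub>v h | h. h \<in> carrier_vec (dim_col A)}"

lemma mat_rangeI: "h \<in> carrier_vec (dim_col A) \<Longrightarrow> x = A *\<^sub>v h \<Longrightarrow> x \<in> mat_range A"
  unfolding mat_range_def by auto

lemma mat_rangeE:
  "x \<in> mat_range A \<Longrightarrow> (\<And>h. h \<in> carrier_vec (dim_col A) \<Longrightarrow> x = A *\<^sub>v h \<Longrightarrow> P) \<Longrightarrow> P"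
  unfolding mat_range_def by auto

lemma mat_range_carrier: "A \<in> carrier_mat nr m \<Longrightarrow> x \<in> mat_range A \<Longrightarrow> x \<in> carrier_vec nr"
  by (auto elim!: mat_rangeE)

lemma zero_mem_mat_range: "A \<in> carrier_mat nr m \<Longrightarrow> 0\<^sub>v nr \<in> mat_range A"
  by (rule mat_rangeI[of "0\<^sub>v m"]) (auto intro!: eq_vecI)

lemma col_mem_mat_range: "A \<in> carrier_mat nr m \<Longrightarrow> j < m \<Longrightarrow> col A j \<in> mat_range A"
  by (rule mat_rangeI[of "unit_vec m j"]) (auto intro!: eq_vecI)

lemma add_mem_mat_range:
  assumes A: "A \<in> carrier_mat nr m" and "x \<in> mat_range A" "y \<in> mat_range A"
  shows "x + y \<in> mat_range A"
proof -
  obtain g h where "g \<in> carrier_vec m" "x = A *\<^sub>v g" "h \<in> carrier_vec m" "y = A *\<^sub>v h"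
    using assms by (auto elim!: mat_rangeE)
  then show ?thesis
    using A by (intro mat_rangeI[of "g + h"]) (auto simp: mult_add_distrib_mat_vec[OF A])
qed

lemma smult_mem_mat_range:
  assumes A: "A \<in> carrier_mat nr m" and "x \<in> mat_range A"
  shows "c \<cdot>\<^sub>v x \<in> mat_range A"
proof -
  obtain g where "g \<in> carrier_vec m" "x = A *\<^sub>v g"
    using assms by (auto elim!: mat_rangeE)
  then show ?thesis using A by (intro mat_rangeI[of "c \<cdot>\<^sub>v g"]) (auto simp: mult_mat_vec[OF A])
qed

lemma minus_mem_mat_range:
  assumes A: "A \<in> carrier_mat nr m" and x: "x \<in> mat_range A" and y: "y \<in> mat_range A"
  shows "x - y \<in> mat_range A"
proof -
  have "x - y = x + (- 1) \<cdot>\<^sub>v y"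
    using mat_range_carrier[OF A x] mat_range_carrier[OF A y] by (auto intro!: eq_vecI)
  then show ?thesis using add_mem_mat_range[OF A x smult_mem_mat_range[OF A y]] by simp
qed

lemma mat_range_mult_subset:
  assumes A: "A \<in> carrier_mat nr m" and X: "X \<in> carrier_mat m p"
  shows "mat_range (A * X) \<subseteq> mat_range A"
proof
  fix x assume "x \<in> mat_range (A * X)"
  then obtain g where g: "g \<in> carrier_vec p" "x = (A * X) *\<^sub>v g" using X by (auto elim!: mat_rangeE)
  then have "x = A *\<^sub>v (X *\<^sub>v g)" using A X by simp
  then show "x \<in> mat_range A" using X g A by (intro mat_rangeI) auto
qed

lemma mat_range_subsetI:
  assumes A: "A \<in> carrier_mat nr m" and B: "B \<in> carrier_mat nr p"
    and cols: "\<And>j. j < m \<Longrightarrow> col A j \<in> mat_range B"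
  shows "mat_range A \<subseteq> mat_range B"
proof -
  have "\<forall>j\<in>{..<m}. \<exists>g. g \<in> carrier_vec p \<and> col A j = B *\<^sub>v g"
    using cols B unfolding mat_range_def by fastforce
  from bchoice[OF this] obtain h where "\<forall>j\<in>{..<m}. h j \<in> carrier_vec p \<and> col A j = B *\<^sub>v h j"
    by blast
  then have h: "h j \<in> carrier_vec p" "col A j = B *\<^sub>v h j" if "j < m" for j
    using that by auto
  let ?H = "mat p m (\<lambda>(i, j). h j $ i)"
  have "A = B * ?H"
  proof (rule eq_matI)
    fix i j assume "i < dim_row (B * ?H)" "j < dim_col (B * ?H)"
    then have i: "i < nr" and j: "j < m" using B by auto
    have "col ?H j = h j" using h(1)[OF j] j by (auto intro!: eq_vecI)
    have "A $$ (i, j) = col A j $ i" using A i j by simp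
    also have "\<dots> = (B *\<^sub>v h j) $ i" using h(2)[OF j] by simp
    also have "\<dots> = (B * ?H) $$ (i, j)" using \<open>col ?H j = h j\<close> B i j by simp
    finally show "A $$ (i, j) = (B * ?H) $$ (i, j)" .
  qed (use A B in auto)
  then show ?thesis using mat_range_mult_subset[OF B, of ?H m] by simp
qed

lemma mult_mat_vec_mem_mat_range:
  assumes M: "M \<in> carrier_mat nr nr'" and A: "A \<in> carrier_mat nr' m" and B: "B \<in> carrier_mat nr p"
    and cols: "\<And>j. j < m \<Longrightarrow> M *\<^sub>v col A j \<in> mat_range B" and x: "x \<in> mat_range A"
  shows "M *\<^sub>v x \<in> mat_range B"
proof -
  have "mat_range (M * A) \<subseteq> mat_range B"
  proof (rule mat_range_subsetI[OF mult_carrier_mat[OF M A] B])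
    fix j assume j: "j < m"
    show "col (M * A) j \<in> mat_range B" unfolding col_mult2[OF M A j] by (rule cols[OF j])
  qed
  moreover obtain g where "g \<in> carrier_vec m" "x = A *\<^sub>v g" using x A by (auto elim!: mat_rangeE)
  then have "M *\<^sub>v x \<in> mat_range (M * A)" using M A by (intro mat_rangeI[of g]) auto
  ultimately show ?thesis by auto
qed

lemma pow_mat_Suc_left: "A \<in> carrier_mat n n \<Longrightarrow> A ^\<^sub>m Suc k = A * A ^\<^sub>m k"
  by (induction k) (auto simp: assoc_mult_mat[of A n n _ n _ n])

section \<open>Orthonormality of the unitary Arnoldi vectors\<close>

declare ua_q.simps(3)[simp del]

locale unitary_arnoldi =
  fixes V :: "complex mat" and b :: "complex vec" and n k :: nat
  assumes V_carrier: "V \<in> carrier_mat n n" and V_isometry: "mat_adjoint V * V = 1\<^sub>m n"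
    and b_carrier: "b \<in> carrier_vec n" and no_breakdown: "ua_no_breakdown V b k"
begin

abbreviation q :: "nat \<Rightarrow> complex vec" where
  "q j \<equiv> ua_q V b j"

(* qt j is the paper's unnormalised vector q~_(j+1). *)
abbreviation qt :: "nat \<Rightarrow> complex vec" where
  "qt j \<equiv> ua_qt V (q (j - 1)) (q j)"

lemma b_nonzero: "vnorm b \<noteq> 0"
  using no_breakdown unfolding ua_no_breakdown_def by auto

lemma lsub_nonzero: "1 \<le> j \<Longrightarrow> j \<le> k \<Longrightarrow> ua_lsub V b j \<noteq> 0"
  using no_breakdown unfolding ua_no_breakdown_def by auto

lemma usup_denominator_nonzero: "2 \<le> j \<Longrightarrow> j \<le> k \<Longrightarrow> cinner (q (j - 1)) (V *\<^sub>v q (j - 1)) \<noteq> 0"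
  using no_breakdown unfolding ua_no_breakdown_def by auto

lemma q_carrier[simp]: "q j \<in> carrier_vec n"
proof -
  have "q j \<in> carrier_vec n \<and> q (Suc j) \<in> carrier_vec n"
    by (induction j) (use V_carrier b_carrier in \<open>auto simp: ua_q.simps(3) ua_qt_def\<close>)
  then show ?thesis ..
qed

lemma q_dim[simp]: "dim_vec (q j) = n"
  by (rule carrier_vecD[OF q_carrier])

lemma qt_carrier[simp]: "ua_qt V (q i) (q j) \<in> carrier_vec n"
  using V_carrier unfolding ua_qt_def by simp

lemma qt_dim[simp]: "dim_vec (ua_qt V (q i) (q j)) = n"
  by (rule carrier_vecD[OF qt_carrier])

lemma q_0: "q 0 = 0\<^sub>v n"
  using b_carrier by simp

lemma V_q_0: "V *\<^sub>v q 0 = 0\<^sub>v n"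
  unfolding q_0 using V_carrier by (auto simp: scalar_prod_def intro!: eq_vecI)

lemma usup_1: "ua_usup V b 1 = 0"
  unfolding ua_usup_def ua_u_def using q_0 by simp

lemma q_Suc: "1 \<le> j \<Longrightarrow> q (Suc j) = complex_of_real (1 / ua_lsub V b j) \<cdot>\<^sub>v qt j"
  by (cases j) (auto simp: ua_lsub_def ua_q.simps(3))

lemma qt_eq: "1 \<le> j \<Longrightarrow> j \<le> k \<Longrightarrow> qt j = complex_of_real (ua_lsub V b j) \<cdot>\<^sub>v q (Suc j)"
  using q_Suc[of j] lsub_nonzero[of j] by (auto simp: smult_smult_assoc)

lemma cinner_V_isometry: "x \<in> carrier_vec n \<Longrightarrow> y \<in> carrier_vec n \<Longrightarrow> cinner (V *\<^sub>v x) (V *\<^sub>v y) = cinner x y"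
  using cinner_isometry[OF V_carrier V_isometry] by auto

definition perp_prefix :: "nat \<Rightarrow> complex vec \<Rightarrow> bool" where
  "perp_prefix i y \<longleftrightarrow> (\<forall>m. 1 \<le> m \<longrightarrow> m < i \<longrightarrow> cinner (q m) y = 0)"

text \<open>The invariant of the \<open>q\<^sub>i\<close> (\<open>q1_proportional_q\<close>) that makes the two-term recurrence
  orthogonalise against all earlier vectors (\<open>qt_orthogonal\<close>).\<close>
definition q1_proportional :: "nat \<Rightarrow> complex vec \<Rightarrow> bool" where
  "q1_proportional i x \<longleftrightarrow> x \<in> carrier_vec n \<and> (\<exists>a. \<forall>y\<in>carrier_vec n.
     perp_prefix i y \<longrightarrow> cinner x (V *\<^sub>v y) = a * cinner (q 1) (V *\<^sub>v y))"

lemma q1_proportional_add: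
  assumes "q1_proportional i x" "q1_proportional i y"
  shows "q1_proportional i (x + y)"
proof -
  obtain a c where x: "x \<in> carrier_vec n" and y: "y \<in> carrier_vec n"
    and a: "\<forall>z\<in>carrier_vec n. perp_prefix i z \<longrightarrow> cinner x (V *\<^sub>v z) = a * cinner (q 1) (V *\<^sub>v z)"
    and c: "\<forall>z\<in>carrier_vec n. perp_prefix i z \<longrightarrow> cinner y (V *\<^sub>v z) = c * cinner (q 1) (V *\<^sub>v z)"
    using assms unfolding q1_proportional_def by blast
  show ?thesis
    unfolding q1_proportional_def
    using x y a c V_carrier by (intro conjI exI[of _ "a + c"]) (auto simp: cinner_add_left[of _ n] algebra_simps)
qed

lemma q1_proportional_smult: "q1_proportional i x \<Longrightarrow> q1_proportional i (c \<cdot>\<^sub>v x)"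
  unfolding q1_proportional_def
  by (metis (no_types, lifting) cinner_smult_left mult.assoc smult_carrier_vec)

lemma q1_proportional_minus:
  assumes x: "q1_proportional i x" and y: "q1_proportional i y"
  shows "q1_proportional i (x - y)"
proof -
  have "x - y = x + (- 1) \<cdot>\<^sub>v y" using x y unfolding q1_proportional_def by auto
  then show ?thesis using q1_proportional_add[OF x q1_proportional_smult[OF y]] by simp
qed

lemma q1_proportional_mono: "q1_proportional i x \<Longrightarrow> i \<le> i' \<Longrightarrow> q1_proportional i' x"
  unfolding q1_proportional_def perp_prefix_def by (meson order_less_le_trans)

lemma q1_proportional_V_q:
  assumes "m < i"
  shows "q1_proportional i (V *\<^sub>v q m)"
proof -
  have "cinner (V *\<^sub>v q m) (V *\<^sub>v y) = 0 * cinner (q 1) (V *\<^sub>v y)"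
    if "y \<in> carrier_vec n" "perp_prefix i y" for y
  proof -
    have "cinner (q m) y = 0" using that assms unfolding perp_prefix_def by (cases "m = 0") auto
    then show ?thesis using cinner_V_isometry[of "q m" y] that by simp
  qed
  then show ?thesis unfolding q1_proportional_def using V_carrier by auto
qed

lemma q1_proportional_q: "q1_proportional i (q i)"
proof (induction i rule: less_induct)
  case (less i)
  consider "i = 0" | "i = 1" | j where "i = Suc j" "1 \<le> j"
    by (metis One_nat_def less_one linorder_not_le not0_implies_Suc)
  then show ?case
  proof cases
    case 1
    then show ?thesis unfolding q1_proportional_def using q_0 by (intro conjI exI[of _ 0]) auto
  next
    case 2
    then show ?thesis unfolding q1_proportional_def using b_carrier by (intro conjI exI[of _ 1]) auto
  next
    case 3
    have "j < i" "j - 1 < i" using 3(1) by auto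
    then have "q1_proportional i (q j)" "q1_proportional i (q (j - 1))"
      by (meson less.IH less_imp_le q1_proportional_mono)+
    then have "q1_proportional i (qt j)"
      unfolding ua_qt_def using 3(1)
      by (intro q1_proportional_add q1_proportional_minus q1_proportional_smult q1_proportional_V_q) auto
    then show ?thesis using q_Suc[OF 3(2)] 3(1) q1_proportional_smult by simp
  qed
qed

lemma cinner_qt:
  "x \<in> carrier_vec n \<Longrightarrow> cinner x (qt m) = cinner x (V *\<^sub>v q m)
     - ua_l V (q (m - 1)) (q m) * cinner x (q m) + ua_u V (q (m - 1)) (q m) * cinner x (V *\<^sub>v q (m - 1))"
  unfolding ua_qt_def using V_carrier
  by (simp add: cinner_add_right[of _ n] cinner_minus_right[of _ n] cinner_smult_right)

lemma cinner_V_add_smult: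
  assumes "x \<in> carrier_vec n" "y \<in> carrier_vec n" "z \<in> carrier_vec n"
  shows "cinner x (V *\<^sub>v (y + c \<cdot>\<^sub>v z)) = cinner x (V *\<^sub>v y) + c * cinner x (V *\<^sub>v z)"
  using assms V_carrier
  by (simp add: mult_add_distrib_mat_vec[OF V_carrier] mult_mat_vec[OF V_carrier]
      cinner_add_right[of _ n] cinner_smult_right)

lemma qt_orthogonal:
  assumes m: "1 \<le> m" "m \<le> k"
    and orthonormal: "\<And>i j. 1 \<le> i \<Longrightarrow> i \<le> m \<Longrightarrow> 1 \<le> j \<Longrightarrow> j \<le> m \<Longrightarrow>
      cinner (q i) (q j) = (if i = j then 1 else 0)"
    and i: "1 \<le> i" "i \<le> m"
  shows "cinner (q i) (qt m) = 0"
proof -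
  let ?u = "ua_u V (q (m - 1)) (q m)"
  let ?p = "q m + ?u \<cdot>\<^sub>v q (m - 1)"
  have Vp: "cinner x (V *\<^sub>v ?p) = cinner x (V *\<^sub>v q m) + ?u * cinner x (V *\<^sub>v q (m - 1))"
    if "x \<in> carrier_vec n" for x
    using cinner_V_add_smult that by simp
  have u_choice: "cinner (q (m - 1)) (V *\<^sub>v ?p) = 0" if "2 \<le> m"
    using usup_denominator_nonzero[OF that m(2)] Vp[of "q (m - 1)"] by (simp add: ua_u_def field_simps)
  consider "i = m" | "i = m - 1" "2 \<le> m" | "i < m - 1" using i by linarith
  then show ?thesis
  proof cases
    case 1
    then show ?thesis using cinner_qt[of "q i" m] orthonormal[OF i i] unfolding ua_l_def by simp
  next
    case 2
    then show ?thesis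
      using cinner_qt[of "q i" m] u_choice Vp[of "q i"] orthonormal[OF i m(1) order.refl] by simp
  next
    case 3
    have m3: "3 \<le> m" using 3 i by linarith
    have perp: "perp_prefix (m - 1) ?p"
      unfolding perp_prefix_def using orthonormal[of _ m] orthonormal[of _ "m - 1"] m3
      by (simp add: cinner_add_right[of _ n] cinner_smult_right)
    obtain a where a: "\<And>y. y \<in> carrier_vec n \<Longrightarrow> perp_prefix (m - 1) y
        \<Longrightarrow> cinner (q (m - 1)) (V *\<^sub>v y) = a * cinner (q 1) (V *\<^sub>v y)"
      using q1_proportional_q[of "m - 1"] unfolding q1_proportional_def by blast
    have "a \<noteq> 0"
    proof
      assume "a = 0"
      moreover have "perp_prefix (m - 1) (q (m - 1))"
        unfolding perp_prefix_def using orthonormal[of _ "m - 1"] m3 by simp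
      ultimately show False using a[of "q (m - 1)"] usup_denominator_nonzero[of m] m3 m(2) by simp
    qed
    then have q1_Vp: "cinner (q 1) (V *\<^sub>v ?p) = 0" using a[OF _ perp] u_choice m3 by simp
    obtain c where "\<And>y. y \<in> carrier_vec n \<Longrightarrow> perp_prefix i y
        \<Longrightarrow> cinner (q i) (V *\<^sub>v y) = c * cinner (q 1) (V *\<^sub>v y)"
      using q1_proportional_q[of i] unfolding q1_proportional_def by blast
    moreover have "perp_prefix i ?p" using perp 3 unfolding perp_prefix_def by simp
    ultimately have "cinner (q i) (V *\<^sub>v ?p) = 0" using q1_Vp by simp
    then show ?thesis
      using cinner_qt[of "q i" m] Vp[of "q i"] orthonormal[OF i m(1) order.refl] 3 by simp
  qed
qed

lemma q_orthonormal:
  "m \<le> Suc k \<Longrightarrow> 1 \<le> i \<Longrightarrow> i \<le> m \<Longrightarrow> 1 \<le> j \<Longrightarrow> j \<le> m \<Longrightarrow>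
   cinner (q i) (q j) = (if i = j then 1 else 0)"
proof (induction m arbitrary: i j)
  case 0
  then show ?case by simp
next
  case (Suc m)
  show ?case
  proof (cases "m = 0")
    case True
    then have "i = 1" "j = 1" using Suc.prems by auto
    moreover have "cinner (q 1) (q 1) = complex_of_real (1 / vnorm b) * complex_of_real (1 / vnorm b) * cinner b b"
      by (simp add: cinner_smult_left cinner_smult_right)
    moreover have "\<dots> = 1"
      using b_nonzero unfolding cinner_self by (simp add: field_simps power2_eq_square)
    ultimately show ?thesis by simp
  next
    case False
    then have m: "1 \<le> m" "m \<le> k" using Suc.prems by auto
    have IH: "\<And>i j. 1 \<le> i \<Longrightarrow> i \<le> m \<Longrightarrow> 1 \<le> j \<Longrightarrow> j \<le> m \<Longrightarrow>
        cinner (q i) (q j) = (if i = j then 1 else 0)"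
      using Suc by auto
    have new: "cinner (q i) (q (Suc m)) = 0" if "1 \<le> i" "i \<le> m" for i
      using qt_orthogonal[OF m IH that] q_Suc[OF m(1)] by (simp add: cinner_smult_right)
    have new': "cinner (q (Suc m)) (q i) = 0" if "1 \<le> i" "i \<le> m" for i
      using new[OF that] cinner_commute[of "q i" "q (Suc m)"] by simp
    have "cinner (q (Suc m)) (q (Suc m))
        = complex_of_real (1 / ua_lsub V b m) * complex_of_real (1 / ua_lsub V b m) * cinner (qt m) (qt m)"
      unfolding q_Suc[OF m(1)] by (simp add: cinner_smult_left cinner_smult_right)
    also have "\<dots> = 1"
      using lsub_nonzero[OF m] unfolding cinner_self ua_lsub_def by (simp add: field_simps power2_eq_square)
    finally have self: "cinner (q (Suc m)) (q (Suc m)) = 1" .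
    consider "i \<le> m" "j \<le> m" | "i = Suc m" "j = Suc m" | "i = Suc m" "j \<le> m" | "i \<le> m" "j = Suc m"
      using Suc.prems by linarith
    then show ?thesis using IH new new' self Suc.prems by cases simp_all
  qed
qed

abbreviation Q :: "nat \<Rightarrow> complex mat" where
  "Q m \<equiv> ua_Q V b m"

lemma Q_carrier[simp]: "Q m \<in> carrier_mat n m"
  unfolding ua_Q_def using b_carrier by auto

lemma Q_dims[simp]: "dim_row (Q m) = n" "dim_col (Q m) = m"
  unfolding ua_Q_def using b_carrier by auto

lemma Q_col: "j < m \<Longrightarrow> col (Q m) j = q (Suc j)"
  unfolding ua_Q_def using b_carrier by (auto intro!: eq_vecI)

lemma Q_mult_unit_vec: "j < m \<Longrightarrow> Q m *\<^sub>v unit_vec m j = q (Suc j)"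
  unfolding ua_Q_def using b_carrier by (auto intro!: eq_vecI)

lemma Q_isometry: "m \<le> Suc k \<Longrightarrow> mat_adjoint (Q m) * Q m = 1\<^sub>m m"
proof (rule eq_matI)
  fix i j assume m: "m \<le> Suc k" and "i < dim_row (1\<^sub>m m :: complex mat)" "j < dim_col (1\<^sub>m m :: complex mat)"
  then have i: "i < m" and j: "j < m" by auto
  have "(mat_adjoint (Q m) * Q m) $$ (i, j) = cinner (q (Suc i)) (q (Suc j))"
    using i j b_carrier unfolding ua_Q_def cinner_def
    by (auto simp: scalar_prod_def atLeast0LessThan intro!: sum.cong)
  then show "(mat_adjoint (Q m) * Q m) $$ (i, j) = 1\<^sub>m m $$ (i, j)"
    using q_orthonormal[of m "Suc i" "Suc j"] i j m by simp
qed auto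

lemma Q_mult_scaled_unit_vec_0: "Q (Suc m) *\<^sub>v (complex_of_real (vnorm b) \<cdot>\<^sub>v unit_vec (Suc m) 0) = b"
proof -
  have "Q (Suc m) *\<^sub>v (complex_of_real (vnorm b) \<cdot>\<^sub>v unit_vec (Suc m) 0) = complex_of_real (vnorm b) \<cdot>\<^sub>v q 1"
    using mult_mat_vec[OF Q_carrier] Q_mult_unit_vec[of 0 "Suc m"] by simp
  also have "\<dots> = b" using b_nonzero b_carrier by (auto intro!: eq_vecI)
  finally show ?thesis .
qed

lemma arnoldi_recurrence:
  assumes "1 \<le> j" "j \<le> k"
  shows "V *\<^sub>v q j + ua_usup V b j \<cdot>\<^sub>v (V *\<^sub>v q (j - 1))
    = ua_ldiag V b j \<cdot>\<^sub>v q j + complex_of_real (ua_lsub V b j) \<cdot>\<^sub>v q (Suc j)"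
proof (rule eq_vecI)
  fix r assume "r < dim_vec (ua_ldiag V b j \<cdot>\<^sub>v q j + complex_of_real (ua_lsub V b j) \<cdot>\<^sub>v q (Suc j))"
  then have r: "r < n" by simp
  show "(V *\<^sub>v q j + ua_usup V b j \<cdot>\<^sub>v (V *\<^sub>v q (j - 1))) $ r
    = (ua_ldiag V b j \<cdot>\<^sub>v q j + complex_of_real (ua_lsub V b j) \<cdot>\<^sub>v q (Suc j)) $ r"
    using arg_cong[OF qt_eq[OF assms], of "\<lambda>v. v $ r"] r V_carrier
    unfolding ua_qt_def ua_ldiag_def ua_usup_def by (simp add: algebra_simps)
qed (use V_carrier in simp)

end

locale shifted_unitary_arnoldi = unitary_arnoldi +
  fixes c1 c2 :: real
begin

abbreviation Uk :: "complex mat" where "Uk \<equiv> ua_U V b k"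
abbreviation Lk :: "complex mat" where "Lk \<equiv> ua_L V b k"
abbreviation Tk :: "complex mat" where
  "Tk \<equiv> complex_of_real c1 \<cdot>\<^sub>m Uk + complex_of_real c2 \<cdot>\<^sub>m Lk"
abbreviation \<nu> :: complex where
  "\<nu> \<equiv> complex_of_real (c2 * ua_lsub V b k)"
abbreviation Tk_ext :: "complex mat" where
  "Tk_ext \<equiv> mat (k + 1) k (\<lambda>(i, j). if i < k then Tk $$ (i, j) else if j = k - 1 then \<nu> else 0)"
abbreviation D :: "complex mat" where
  "D \<equiv> complex_of_real c1 \<cdot>\<^sub>m 1\<^sub>m n + complex_of_real c2 \<cdot>\<^sub>m V"
abbreviation Wk :: "complex mat" where
  "Wk \<equiv> Q k * Uk"

lemma U_carrier[simp]: "Uk \<in> carrier_mat k k" unfolding ua_U_def by auto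
lemma L_carrier[simp]: "Lk \<in> carrier_mat k k" unfolding ua_L_def by auto
lemma UL_dims[simp]: "dim_row Uk = k" "dim_col Uk = k" "dim_row Lk = k" "dim_col Lk = k"
  unfolding ua_U_def ua_L_def by auto
lemma T_carrier[simp]: "Tk \<in> carrier_mat k k" by simp
lemma Tk_ext_carrier[simp]: "Tk_ext \<in> carrier_mat (Suc k) k" by simp
lemma D_carrier[simp]: "D \<in> carrier_mat n n" using V_carrier by simp
lemma W_carrier[simp]: "Wk \<in> carrier_mat n k" by (rule mult_carrier_mat[OF Q_carrier U_carrier])

lemma D_mult_vec:
  assumes x: "x \<in> carrier_vec n"
  shows "D *\<^sub>v x = complex_of_real c1 \<cdot>\<^sub>v x + complex_of_real c2 \<cdot>\<^sub>v (V *\<^sub>v x)"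
  using x V_carrier by (intro eq_vecI) (auto simp: add_scalar_prod_distrib[of _ n] smult_scalar_prod_distrib[of _ n])

lemma U_col: "j < k \<Longrightarrow> col Uk j = unit_vec k j + ua_usup V b (Suc j) \<cdot>\<^sub>v unit_vec k (j - 1)"
  unfolding ua_U_def using usup_1 by (cases "j = 0") (auto intro!: eq_vecI simp: unit_vec_def)

lemma W_col:
  assumes j: "j < k"
  shows "col Wk j = q (Suc j) + ua_usup V b (Suc j) \<cdot>\<^sub>v q j"
proof -
  have "col Wk j = Q k *\<^sub>v col Uk j" by (rule col_mult2[OF Q_carrier U_carrier j])
  also have "\<dots> = Q k *\<^sub>v unit_vec k j + ua_usup V b (Suc j) \<cdot>\<^sub>v (Q k *\<^sub>v unit_vec k (j - 1))"
    unfolding U_col[OF j] by (simp add: mult_add_distrib_mat_vec[OF Q_carrier] mult_mat_vec[OF Q_carrier])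
  also have "\<dots> = q (Suc j) + ua_usup V b (Suc j) \<cdot>\<^sub>v q j"
    using Q_mult_unit_vec[of j k] Q_mult_unit_vec[of "j - 1" k] j usup_1
    by (cases "j = 0") (auto intro!: eq_vecI)
  finally show ?thesis .
qed

lemma Tk_ext_index:
  "i < Suc k \<Longrightarrow> j < k \<Longrightarrow> Tk_ext $$ (i, j) =
     (if i = j then c1 + c2 * ua_ldiag V b (Suc j) else 0)
   + (if Suc i = j then c1 * ua_usup V b (Suc j) else 0)
   + (if i = Suc j then c2 * ua_lsub V b (Suc j) else 0)"
  unfolding ua_U_def ua_L_def by auto

lemma Tk_ext_col:
  assumes j: "j < k"
  shows "col Tk_ext j = complex_of_real c1 * ua_usup V b (Suc j) \<cdot>\<^sub>v unit_vec (Suc k) (j - 1)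
    + (c1 + c2 * ua_ldiag V b (Suc j)) \<cdot>\<^sub>v unit_vec (Suc k) j
    + complex_of_real (c2 * ua_lsub V b (Suc j)) \<cdot>\<^sub>v unit_vec (Suc k) (Suc j)"
proof (rule eq_vecI)
  fix i assume "i < dim_vec (complex_of_real c1 * ua_usup V b (Suc j) \<cdot>\<^sub>v unit_vec (Suc k) (j - 1)
    + (c1 + c2 * ua_ldiag V b (Suc j)) \<cdot>\<^sub>v unit_vec (Suc k) j
    + complex_of_real (c2 * ua_lsub V b (Suc j)) \<cdot>\<^sub>v unit_vec (Suc k) (Suc j))"
  then have i: "i < Suc k" by simp
  have "col Tk_ext j $ i = Tk_ext $$ (i, j)" using i j by simp
  then show "col Tk_ext j $ i = (complex_of_real c1 * ua_usup V b (Suc j) \<cdot>\<^sub>v unit_vec (Suc k) (j - 1)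
    + (c1 + c2 * ua_ldiag V b (Suc j)) \<cdot>\<^sub>v unit_vec (Suc k) j
    + complex_of_real (c2 * ua_lsub V b (Suc j)) \<cdot>\<^sub>v unit_vec (Suc k) (Suc j)) $ i"
    unfolding Tk_ext_index[OF i j] using i j usup_1
    by (cases "j = 0") (auto simp del: index_mat simp: unit_vec_def)
qed simp

lemma arnoldi_relation: "D * Wk = Q (Suc k) * Tk_ext"
proof (rule mat_col_eqI)
  fix j assume "j < dim_col (Q (Suc k) * Tk_ext)"
  then have j: "j < k" by simp
  let ?u = "ua_usup V b (Suc j)" and ?l = "ua_ldiag V b (Suc j)" and ?la = "ua_lsub V b (Suc j)"
  let ?rhs = "(complex_of_real c1 * ?u) \<cdot>\<^sub>v q j + (c1 + c2 * ?l) \<cdot>\<^sub>v q (Suc j)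
    + complex_of_real (c2 * ?la) \<cdot>\<^sub>v q (Suc (Suc j))"
  have rec: "V *\<^sub>v q (Suc j) + ?u \<cdot>\<^sub>v (V *\<^sub>v q j) = ?l \<cdot>\<^sub>v q (Suc j) + complex_of_real ?la \<cdot>\<^sub>v q (Suc (Suc j))"
    using arnoldi_recurrence[of "Suc j"] j by simp
  have "col (D * Wk) j = D *\<^sub>v (q (Suc j) + ?u \<cdot>\<^sub>v q j)"
    using j by (simp add: col_mult2[OF D_carrier W_carrier] W_col)
  also have "\<dots> = complex_of_real c1 \<cdot>\<^sub>v (q (Suc j) + ?u \<cdot>\<^sub>v q j)
      + complex_of_real c2 \<cdot>\<^sub>v (V *\<^sub>v q (Suc j) + ?u \<cdot>\<^sub>v (V *\<^sub>v q j))"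
    using V_carrier by (simp add: D_mult_vec mult_add_distrib_mat_vec[OF V_carrier] mult_mat_vec[OF V_carrier])
  also have "\<dots> = ?rhs"
    unfolding rec using V_carrier by (intro eq_vecI) (simp_all add: algebra_simps)
  also have "?rhs = col (Q (Suc k) * Tk_ext) j"
  proof -
    have "(complex_of_real c1 * ?u) \<cdot>\<^sub>v (Q (Suc k) *\<^sub>v unit_vec (Suc k) (j - 1))
        = (complex_of_real c1 * ?u) \<cdot>\<^sub>v q j"
      using j usup_1 Q_mult_unit_vec[of "j - 1" "Suc k"] by (cases "j = 0") auto
    moreover have "col (Q (Suc k) * Tk_ext) j = Q (Suc k) *\<^sub>v col Tk_ext j"
      by (rule col_mult2[OF Q_carrier Tk_ext_carrier j])
    ultimately show ?thesis
      using j Q_mult_unit_vec[of j "Suc k"] Q_mult_unit_vec[of "Suc j" "Suc k"]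
      unfolding Tk_ext_col[OF j]
      by (simp add: mult_add_distrib_mat_vec[OF Q_carrier] mult_mat_vec[OF Q_carrier])
  qed
  finally show "col (D * Wk) j = col (Q (Suc k) * Tk_ext) j" .
qed (use V_carrier in \<open>auto simp: ua_U_def\<close>)

abbreviation K :: "nat \<Rightarrow> complex mat" where
  "K m \<equiv> mat n m (\<lambda>(i, j). ((D ^\<^sub>m j) *\<^sub>v b) $ i)"

lemma krylov_eq_mat_range: "krylov D b m = mat_range (K m)"
  unfolding krylov_def mat_range_def using b_carrier by auto

lemma K_carrier[simp]: "K m \<in> carrier_mat n m" by simp

lemma K_col: "j < m \<Longrightarrow> col (K m) j = (D ^\<^sub>m j) *\<^sub>v b"
  using b_carrier V_carrier by (auto intro!: eq_vecI)

lemma D_pow_Suc_mult_vec: "(D ^\<^sub>m Suc j) *\<^sub>v b = D *\<^sub>v ((D ^\<^sub>m j) *\<^sub>v b)"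
  using pow_mat_Suc_left[OF D_carrier] b_carrier by (simp add: assoc_mult_mat_vec[of _ n n _ n])

lemma Q_range_mono: "m \<le> m' \<Longrightarrow> mat_range (Q m) \<subseteq> mat_range (Q m')"
  using Q_col col_mem_mat_range[OF Q_carrier] by (intro mat_range_subsetI[OF Q_carrier Q_carrier]) simp

lemma q_mem_Q_range: "i \<le> m \<Longrightarrow> q i \<in> mat_range (Q m)"
  using q_0 zero_mem_mat_range[OF Q_carrier] Q_col[of _ m] col_mem_mat_range[OF Q_carrier, of _ m]
  by (cases i) auto

lemma V_q_mem_Q_range: "i \<le> k \<Longrightarrow> V *\<^sub>v q i \<in> mat_range (Q (Suc i))"
proof (induction i)
  case 0
  then show ?case using V_q_0 zero_mem_mat_range[OF Q_carrier] by simp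
next
  case (Suc i)
  have rec: "V *\<^sub>v q (Suc i) + ua_usup V b (Suc i) \<cdot>\<^sub>v (V *\<^sub>v q i) = ua_ldiag V b (Suc i) \<cdot>\<^sub>v q (Suc i)
      + complex_of_real (ua_lsub V b (Suc i)) \<cdot>\<^sub>v q (Suc (Suc i))"
    using arnoldi_recurrence[of "Suc i"] Suc.prems by simp
  have "V *\<^sub>v q (Suc i) = (ua_ldiag V b (Suc i) \<cdot>\<^sub>v q (Suc i)
      + complex_of_real (ua_lsub V b (Suc i)) \<cdot>\<^sub>v q (Suc (Suc i))) - ua_usup V b (Suc i) \<cdot>\<^sub>v (V *\<^sub>v q i)"
  proof (rule eq_vecI)
    fix r assume "r < dim_vec ((ua_ldiag V b (Suc i) \<cdot>\<^sub>v q (Suc i)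
      + complex_of_real (ua_lsub V b (Suc i)) \<cdot>\<^sub>v q (Suc (Suc i))) - ua_usup V b (Suc i) \<cdot>\<^sub>v (V *\<^sub>v q i))"
    then show "(V *\<^sub>v q (Suc i)) $ r = ((ua_ldiag V b (Suc i) \<cdot>\<^sub>v q (Suc i)
      + complex_of_real (ua_lsub V b (Suc i)) \<cdot>\<^sub>v q (Suc (Suc i))) - ua_usup V b (Suc i) \<cdot>\<^sub>v (V *\<^sub>v q i)) $ r"
      using arg_cong[OF rec, of "\<lambda>v. v $ r"] V_carrier by (simp add: eq_diff_eq)
  qed (use V_carrier in simp)
  moreover have "V *\<^sub>v q i \<in> mat_range (Q (Suc (Suc i)))"
    using Suc Q_range_mono[of "Suc i" "Suc (Suc i)"] by auto
  ultimately show ?case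
    by (simp only:) (intro minus_mem_mat_range[OF Q_carrier] add_mem_mat_range[OF Q_carrier]
        smult_mem_mat_range[OF Q_carrier] q_mem_Q_range; simp)
qed

lemma D_q_mem_Q_range: "i \<le> k \<Longrightarrow> D *\<^sub>v q i \<in> mat_range (Q (Suc i))"
  unfolding D_mult_vec[OF q_carrier]
  by (intro add_mem_mat_range[OF Q_carrier] smult_mem_mat_range[OF Q_carrier] q_mem_Q_range V_q_mem_Q_range)
    auto

lemma krylov_vec_mem_Q_range: "j < k \<Longrightarrow> (D ^\<^sub>m j) *\<^sub>v b \<in> mat_range (Q (Suc j))"
proof (induction j)
  case 0
  have "b \<in> mat_range (Q 1)"
    using Q_mult_scaled_unit_vec_0[of 0] by (intro mat_rangeI[of "complex_of_real (vnorm b) \<cdot>\<^sub>v unit_vec 1 0"]) auto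
  then show ?case using b_carrier V_carrier by simp
next
  case (Suc j)
  have "D *\<^sub>v ((D ^\<^sub>m j) *\<^sub>v b) \<in> mat_range (Q (Suc (Suc j)))"
  proof (rule mult_mat_vec_mem_mat_range[OF D_carrier Q_carrier Q_carrier])
    show "(D ^\<^sub>m j) *\<^sub>v b \<in> mat_range (Q (Suc j))" using Suc by simp
    fix i assume i: "i < Suc j"
    have "D *\<^sub>v q (Suc i) \<in> mat_range (Q (Suc (Suc i)))" using D_q_mem_Q_range[of "Suc i"] i Suc.prems by simp
    also have "\<dots> \<subseteq> mat_range (Q (Suc (Suc j)))" using Q_range_mono i by simp
    finally show "D *\<^sub>v col (Q (Suc j)) i \<in> mat_range (Q (Suc (Suc j)))" using Q_col[OF i] by simp
  qed
  then show ?case by (simp only: D_pow_Suc_mult_vec)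
qed

lemma U_invertible: obtains Ui where "Ui \<in> carrier_mat k k" "Uk * Ui = 1\<^sub>m k"
proof -
  have "upper_triangular Uk" unfolding ua_U_def upper_triangular_def by auto
  then have "det Uk = prod_list (diag_mat Uk)" by (rule det_upper_triangular[OF _ U_carrier])
  also have "\<dots> = 1" unfolding prod_list_diag_prod by (simp add: ua_U_def)
  finally have "det Uk = 1" .
  from det_non_zero_imp_unit[OF U_carrier, of undefined] this
  show ?thesis using that unfolding Units_def ring_mat_def by auto
qed

lemma krylov_subset_W_range: "krylov D b k \<subseteq> mat_range Wk"
proof -
  have "mat_range (K k) \<subseteq> mat_range (Q k)"
  proof (rule mat_range_subsetI[OF K_carrier Q_carrier])
    fix j assume j: "j < k"
    show "col (K k) j \<in> mat_range (Q k)"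
      using K_col[OF j] krylov_vec_mem_Q_range[OF j] Q_range_mono[of "Suc j" k] j by auto
  qed
  moreover obtain Ui where Ui: "Ui \<in> carrier_mat k k" "Uk * Ui = 1\<^sub>m k" by (rule U_invertible)
  then have "Q k = Wk * Ui" by (simp add: assoc_mult_mat[of _ n k _ k _ k])
  then have "mat_range (Q k) \<subseteq> mat_range Wk" using mat_range_mult_subset[OF W_carrier Ui(1)] by simp
  ultimately show ?thesis using krylov_eq_mat_range by auto
qed

lemma K_range_mono: "m \<le> m' \<Longrightarrow> mat_range (K m) \<subseteq> mat_range (K m')"
  using K_col col_mem_mat_range[OF K_carrier] by (intro mat_range_subsetI[OF K_carrier K_carrier]) simp

lemma V_mem_K_range:
  assumes c2: "c2 \<noteq> 0" and x: "x \<in> mat_range (K m)"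
  shows "V *\<^sub>v x \<in> mat_range (K (Suc m))"
proof -
  have x_carrier: "x \<in> carrier_vec n" using mat_range_carrier[OF K_carrier x] .
  have "D *\<^sub>v x \<in> mat_range (K (Suc m))"
  proof (rule mult_mat_vec_mem_mat_range[OF D_carrier K_carrier K_carrier _ x])
    fix j assume j: "j < m"
    have "D *\<^sub>v col (K m) j = col (K (Suc m)) (Suc j)"
      using K_col[OF j] K_col[of "Suc j" "Suc m"] j D_pow_Suc_mult_vec by simp
    then show "D *\<^sub>v col (K m) j \<in> mat_range (K (Suc m))"
      using col_mem_mat_range[OF K_carrier, of "Suc j" "Suc m"] j by simp
  qed
  moreover have "x \<in> mat_range (K (Suc m))" using x K_range_mono[of m "Suc m"] by auto
  moreover have "V *\<^sub>v x = complex_of_real (1 / c2) \<cdot>\<^sub>v (D *\<^sub>v x - complex_of_real c1 \<cdot>\<^sub>v x)"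
    unfolding D_mult_vec[OF x_carrier] using x_carrier V_carrier c2 by (intro eq_vecI) (auto simp: field_simps)
  ultimately show ?thesis
    by (simp only:) (intro smult_mem_mat_range[OF K_carrier] minus_mem_mat_range[OF K_carrier])
qed

lemma q_mem_K_range: "c2 \<noteq> 0 \<Longrightarrow> i \<le> k \<Longrightarrow> q i \<in> mat_range (K i)"
proof (induction i rule: less_induct)
  case (less i)
  consider "i = 0" | "i = 1" | j where "i = Suc j" "1 \<le> j"
    by (metis One_nat_def less_one linorder_not_le not0_implies_Suc)
  then show ?case
  proof cases
    case 1
    then show ?thesis using q_0 zero_mem_mat_range[OF K_carrier] by simp
  next
    case 2
    have "q 1 = complex_of_real (1 / vnorm b) \<cdot>\<^sub>v col (K 1) 0" using K_col[of 0 1] b_carrier V_carrier by simp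
    also have "\<dots> \<in> mat_range (K 1)"
      by (rule smult_mem_mat_range[OF K_carrier col_mem_mat_range[OF K_carrier]]) simp
    finally show ?thesis using 2 by simp
  next
    case 3
    have IH: "q j \<in> mat_range (K j)" "q (j - 1) \<in> mat_range (K (j - 1))"
      using less 3 by auto
    have "V *\<^sub>v q (j - 1) \<in> mat_range (K j)"
      using V_mem_K_range[OF less.prems(1) IH(2)] 3(2) by simp
    then have "V *\<^sub>v q j \<in> mat_range (K i)" "q j \<in> mat_range (K i)" "V *\<^sub>v q (j - 1) \<in> mat_range (K i)"
      using V_mem_K_range[OF less.prems(1) IH(1)] IH(1) K_range_mono[of j i] 3(1) by auto
    then have "qt j \<in> mat_range (K i)"
      unfolding ua_qt_def
      by (intro minus_mem_mat_range[OF K_carrier] add_mem_mat_range[OF K_carrier] smult_mem_mat_range[OF K_carrier])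
    then show ?thesis using q_Suc[OF 3(2)] 3(1) smult_mem_mat_range[OF K_carrier] by simp
  qed
qed

lemma W_range_subset_krylov:
  assumes c2: "c2 \<noteq> 0"
  shows "mat_range Wk \<subseteq> krylov D b k"
proof -
  have "mat_range Wk \<subseteq> mat_range (Q k)" by (rule mat_range_mult_subset[OF Q_carrier U_carrier])
  also have "\<dots> \<subseteq> mat_range (K k)"
  proof (rule mat_range_subsetI[OF Q_carrier K_carrier])
    fix j assume j: "j < k"
    show "col (Q k) j \<in> mat_range (K k)"
      using Q_col[OF j] q_mem_K_range[OF c2, of "Suc j"] K_range_mono[of "Suc j" k] j by auto
  qed
  finally show ?thesis using krylov_eq_mat_range by simp
qed

end

section \<open>Least squares after the Givens rotations\<close>

lemma givens_recursion_carrier: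
  assumes O0: "Os 0 = 1\<^sub>m 1"
    and Orec: "\<And>j. 1 \<le> j \<Longrightarrow> j \<le> k \<Longrightarrow>
      Os j = givens_mat j (cs j) (ss j) * four_block_mat (Os (j - 1)) (0\<^sub>m j 1) (0\<^sub>m 1 j) (1\<^sub>m 1)"
  shows "j \<le> k \<Longrightarrow> Os j \<in> carrier_mat (Suc j) (Suc j)"
proof (induction j)
  case 0
  then show ?case using O0 by simp
next
  case (Suc j)
  have "four_block_mat (Os j) (0\<^sub>m (Suc j) 1) (0\<^sub>m 1 (Suc j)) (1\<^sub>m 1) \<in> carrier_mat (Suc (Suc j)) (Suc (Suc j))"
    using Suc by (metis Suc_eq_plus1 Suc_leD four_block_carrier_mat one_carrier_mat)
  moreover have "givens_mat (Suc j) (cs (Suc j)) (ss (Suc j)) \<in> carrier_mat (Suc (Suc j)) (Suc (Suc j))"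
    unfolding givens_mat_def by simp
  ultimately show ?case using Orec[of "Suc j"] Suc.prems by auto
qed

lemma givens_step_last_col:
  assumes k: "0 < k" and P: "P \<in> carrier_mat k k"
  shows "(givens_mat k c s * four_block_mat P (0\<^sub>m k 1) (0\<^sub>m 1 k) (1\<^sub>m 1)) *\<^sub>v unit_vec (Suc k) k
    = s \<cdot>\<^sub>v unit_vec (Suc k) (k - 1) + complex_of_real c \<cdot>\<^sub>v unit_vec (Suc k) k"
proof -
  let ?G = "givens_mat k c s" and ?B = "four_block_mat P (0\<^sub>m k 1) (0\<^sub>m 1 k) (1\<^sub>m 1)"
  have G: "?G \<in> carrier_mat (Suc k) (Suc k)" unfolding givens_mat_def by simp
  have B: "?B \<in> carrier_mat (Suc k) (Suc k)"
    using P by (metis Suc_eq_plus1 four_block_carrier_mat one_carrier_mat)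
  have "?B *\<^sub>v unit_vec (Suc k) k = unit_vec (Suc k) k"
    using P by (intro eq_vecI) (auto simp: scalar_prod_def unit_vec_def sum.delta')
  then have "(?G * ?B) *\<^sub>v unit_vec (Suc k) k = ?G *\<^sub>v unit_vec (Suc k) k"
    using G B by (simp add: assoc_mult_mat_vec[OF G B])
  also have "\<dots> = s \<cdot>\<^sub>v unit_vec (Suc k) (k - 1) + complex_of_real c \<cdot>\<^sub>v unit_vec (Suc k) k"
    using k unfolding givens_mat_def by (intro eq_vecI) auto
  finally show ?thesis .
qed

lemma mat_inverse_invertible:
  fixes A :: "'a :: field mat"
  assumes "A \<in> carrier_mat n n" "invertible_mat A"
  obtains B where "mat_inverse A = Some B"
proof -
  obtain B where "inverts_mat A B" "inverts_mat B A"
    using assms(2) unfolding invertible_mat_def by blast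
  then have B: "A * B = 1\<^sub>m n" "B * A = 1\<^sub>m (dim_row B)"
    using assms(1) unfolding inverts_mat_def by auto
  have "dim_col B = n" using B(1) assms(1) by (metis index_mult_mat(3) index_one_mat(3))
  moreover have "dim_row B = n" using B(2) assms(1) by (metis carrier_matD(2) index_mult_mat(3) index_one_mat(3))
  ultimately have "B \<in> carrier_mat n n" "B * A = 1\<^sub>m n" using B by auto
  then have "A \<in> Units (ring_mat TYPE('a) n undefined)"
    using assms(1) B unfolding Units_def ring_mat_def by auto
  then show ?thesis using that mat_inverse(1)[OF assms(1)] by fastforce
qed

lemma append_row_mult_vec:
  fixes T :: "'a :: field mat"
  assumes T: "T \<in> carrier_mat k k" and k: "0 < k" and z: "z \<in> carrier_vec k"
    and Tz: "T *\<^sub>v z = \<beta> \<cdot>\<^sub>v unit_vec k 0"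
  shows "mat (k + 1) k (\<lambda>(i, j). if i < k then T $$ (i, j) else if j = k - 1 then \<nu> else 0) *\<^sub>v z
    = \<beta> \<cdot>\<^sub>v unit_vec (Suc k) 0 + (\<nu> * z $ (k - 1)) \<cdot>\<^sub>v unit_vec (Suc k) k"
    (is "?T' *\<^sub>v z = ?rhs")
proof (rule eq_vecI)
  fix i assume "i < dim_vec ?rhs"
  then consider "i < k" | "i = k" by fastforce
  then show "(?T' *\<^sub>v z) $ i = ?rhs $ i"
  proof cases
    case 1
    then show ?thesis using arg_cong[OF Tz, of "\<lambda>v. v $ i"] T z by (simp add: scalar_prod_def)
  next
    case 2
    have "(?T' *\<^sub>v z) $ k = (\<Sum>j = 0..<k. (if j = k - 1 then \<nu> else 0) * z $ j)"
      using z by (simp add: scalar_prod_def)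
    also have "\<dots> = (\<Sum>j = 0..<k. if j = k - 1 then \<nu> * z $ j else 0)"
      by (rule sum.cong) auto
    also have "\<dots> = \<nu> * z $ (k - 1)" using k by simp
    finally show ?thesis using 2 k by simp
  qed
qed simp

lemma upper_block_mult_vec_index:
  "N \<in> carrier_mat (Suc k) k \<Longrightarrow> z \<in> carrier_vec k \<Longrightarrow> i < k \<Longrightarrow>
   (mat k k (\<lambda>(i, j). N $$ (i, j)) *\<^sub>v z) $ i = (N *\<^sub>v z) $ i"
  by (simp add: scalar_prod_def)

lemma upper_block_rotated_mult_vec:
  fixes P M :: "'a :: field mat"
  assumes P: "P \<in> carrier_mat (Suc k) (Suc k)" and k: "0 < k"
    and P_last_col: "P *\<^sub>v unit_vec (Suc k) k = s \<cdot>\<^sub>v unit_vec (Suc k) (k - 1) + c \<cdot>\<^sub>v unit_vec (Suc k) k"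
    and M: "M \<in> carrier_mat (Suc k) k" and z: "z \<in> carrier_vec k" and h: "h \<in> carrier_vec (Suc k)"
    and Mz: "M *\<^sub>v z = h + a \<cdot>\<^sub>v unit_vec (Suc k) k"
  shows "mat k k (\<lambda>(i, j). (P * M) $$ (i, j)) *\<^sub>v z = vec_first (P *\<^sub>v h) k + (a * s) \<cdot>\<^sub>v unit_vec k (k - 1)"
proof (rule eq_vecI)
  fix i assume "i < dim_vec (vec_first (P *\<^sub>v h) k + (a * s) \<cdot>\<^sub>v unit_vec k (k - 1))"
  then have i: "i < k" by simp
  have "(mat k k (\<lambda>(i, j). (P * M) $$ (i, j)) *\<^sub>v z) $ i = ((P * M) *\<^sub>v z) $ i"
    using i z P M by (intro upper_block_mult_vec_index) auto
  also have "(P * M) *\<^sub>v z = P *\<^sub>v h + a \<cdot>\<^sub>v (P *\<^sub>v unit_vec (Suc k) k)"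
    using P M z h by (simp add: Mz mult_add_distrib_mat_vec[OF P] mult_mat_vec[OF P])
  finally show "(mat k k (\<lambda>(i, j). (P * M) $$ (i, j)) *\<^sub>v z) $ i
    = (vec_first (P *\<^sub>v h) k + (a * s) \<cdot>\<^sub>v unit_vec k (k - 1)) $ i"
    unfolding P_last_col using i P h by (auto simp: vec_first_def)
qed simp

lemma vnorm_square_zero_last_row:
  assumes M: "M \<in> carrier_mat (Suc k) k" and last_row: "\<And>j. j < k \<Longrightarrow> M $$ (k, j) = 0"
    and g: "g \<in> carrier_vec (Suc k)" and w: "w \<in> carrier_vec k"
  shows "(vnorm (g - M *\<^sub>v w))\<^sup>2
    = (vnorm (vec_first g k - mat k k (\<lambda>(i, j). M $$ (i, j)) *\<^sub>v w))\<^sup>2 + (cmod (g $ k))\<^sup>2"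
proof -
  have "(M *\<^sub>v w) $ k = 0" using M w last_row by (simp add: scalar_prod_def)
  moreover note upper_block_mult_vec_index[OF M w]
  ultimately show ?thesis
    using g M unfolding vnorm_square by (simp add: vec_first_def)
qed

lemma least_squares_zero_last_row:
  fixes M :: "complex mat" and k :: nat
  defines "R \<equiv> mat k k (\<lambda>(i, j). M $$ (i, j))"
  assumes M: "M \<in> carrier_mat (Suc k) k" and last_row: "\<And>j. j < k \<Longrightarrow> M $$ (k, j) = 0"
    and Ri: "Ri \<in> carrier_mat k k" "Ri * R = 1\<^sub>m k"
    and g: "g \<in> carrier_vec (Suc k)" and w0: "w0 \<in> carrier_vec k" "R *\<^sub>v w0 = vec_first g k"
    and w: "w \<in> carrier_vec k"
  shows "vnorm (g - M *\<^sub>v w0) \<le> vnorm (g - M *\<^sub>v w)"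
    and "vnorm (g - M *\<^sub>v w) \<le> vnorm (g - M *\<^sub>v w0) \<Longrightarrow> w = w0"
proof -
  have R: "R \<in> carrier_mat k k" unfolding R_def by simp
  have split: "(vnorm (g - M *\<^sub>v v))\<^sup>2 = (vnorm (vec_first g k - R *\<^sub>v v))\<^sup>2 + (cmod (g $ k))\<^sup>2"
    if "v \<in> carrier_vec k" for v
    using vnorm_square_zero_last_row[OF M last_row g that] unfolding R_def .
  have "vec_first g k - R *\<^sub>v w0 = 0\<^sub>v k" unfolding w0(2) by simp
  then have w0_res: "(vnorm (g - M *\<^sub>v w0))\<^sup>2 = (cmod (g $ k))\<^sup>2"
    using split[OF w0(1)] vnorm_eq_0_iff by simp
  then show le: "vnorm (g - M *\<^sub>v w0) \<le> vnorm (g - M *\<^sub>v w)"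
    using split[OF w] by (metis le_add_same_cancel2 power2_le_imp_le vnorm_nonneg zero_le_power2)
  assume "vnorm (g - M *\<^sub>v w) \<le> vnorm (g - M *\<^sub>v w0)"
  then have "vnorm (g - M *\<^sub>v w) = vnorm (g - M *\<^sub>v w0)" using le by simp
  then have "vnorm (vec_first g k - R *\<^sub>v w) = 0"
    using split[OF w] w0_res by simp
  then have "vec_first g k - R *\<^sub>v w = 0\<^sub>v k" using vnorm_eq_0_iff R by simp
  then have "R *\<^sub>v w = R *\<^sub>v w0"
    unfolding w0(2) using R w by (intro eq_vecI) (auto simp: vec_eq_iff)
  moreover have "v = Ri *\<^sub>v (R *\<^sub>v v)" if "v \<in> carrier_vec k" for v
    using Ri R that by (simp add: assoc_mult_mat_vec[symmetric, of _ k k _ k])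
  ultimately show "w = w0" using w w0(1) by metis
qed

context shifted_unitary_arnoldi
begin

lemma residual_norm_eq:
  assumes P: "P \<in> carrier_mat (Suc k) (Suc k)" "mat_adjoint P * P = 1\<^sub>m (Suc k)"
    and w: "w \<in> carrier_vec k"
  shows "vnorm (b - D *\<^sub>v (Wk *\<^sub>v w))
    = vnorm (P *\<^sub>v (complex_of_real (vnorm b) \<cdot>\<^sub>v unit_vec (Suc k) 0) - (P * Tk_ext) *\<^sub>v w)"
proof -
  let ?e = "complex_of_real (vnorm b) \<cdot>\<^sub>v unit_vec (Suc k) 0"
  have e: "?e \<in> carrier_vec (Suc k)" by simp
  have Tw: "Tk_ext *\<^sub>v w \<in> carrier_vec (Suc k)" by (rule mult_mat_vec_carrier[OF Tk_ext_carrier w])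
  have "D *\<^sub>v (Wk *\<^sub>v w) = (D * Wk) *\<^sub>v w" using w by (simp add: assoc_mult_mat_vec[of _ n n _ k])
  also have "\<dots> = Q (Suc k) *\<^sub>v (Tk_ext *\<^sub>v w)"
    unfolding arnoldi_relation using w by (simp add: assoc_mult_mat_vec[of _ n "Suc k" _ k])
  finally have "b - D *\<^sub>v (Wk *\<^sub>v w) = Q (Suc k) *\<^sub>v (?e - Tk_ext *\<^sub>v w)"
    using Q_mult_scaled_unit_vec_0[of k] mult_minus_distrib_mat_vec[OF Q_carrier e Tw] by simp
  then have "vnorm (b - D *\<^sub>v (Wk *\<^sub>v w)) = vnorm (P *\<^sub>v (?e - Tk_ext *\<^sub>v w))"
    using vnorm_isometry[OF Q_carrier Q_isometry] vnorm_isometry[OF P] Tw by simp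
  also have "P *\<^sub>v (?e - Tk_ext *\<^sub>v w) = P *\<^sub>v ?e - (P * Tk_ext) *\<^sub>v w"
    using mult_minus_distrib_mat_vec[OF P(1) e Tw] P w by (simp add: assoc_mult_mat_vec[of _ "Suc k" "Suc k" _ k])
  finally show ?thesis .
qed

lemma unique_minimal_residual:
  fixes P Ri :: "complex mat"
  defines "R \<equiv> mat k k (\<lambda>(i, j). (P * Tk_ext) $$ (i, j))"
  assumes P: "P \<in> carrier_mat (Suc k) (Suc k)" "mat_adjoint P * P = 1\<^sub>m (Suc k)"
    and last_row: "\<And>j. j < k \<Longrightarrow> (P * Tk_ext) $$ (k, j) = 0"
    and Ri: "Ri \<in> carrier_mat k k" "Ri * R = 1\<^sub>m k"
    and w0: "w0 \<in> carrier_vec k"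
      "R *\<^sub>v w0 = vec_first (P *\<^sub>v (complex_of_real (vnorm b) \<cdot>\<^sub>v unit_vec (Suc k) 0)) k"
    and y: "y \<in> krylov D b k"
  shows "vnorm (b - D *\<^sub>v (Wk *\<^sub>v w0)) \<le> vnorm (b - D *\<^sub>v y)"
    and "vnorm (b - D *\<^sub>v y) \<le> vnorm (b - D *\<^sub>v (Wk *\<^sub>v w0)) \<Longrightarrow> y = Wk *\<^sub>v w0"
proof -
  obtain w where w: "w \<in> carrier_vec k" "y = Wk *\<^sub>v w"
    using y krylov_subset_W_range by (auto elim!: mat_rangeE)
  have PT: "P * Tk_ext \<in> carrier_mat (Suc k) k" using P by simp
  note least_squares = least_squares_zero_last_row[OF PT last_row Ri[unfolded R_def] _ w0[unfolded R_def] w(1)]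
  show "vnorm (b - D *\<^sub>v (Wk *\<^sub>v w0)) \<le> vnorm (b - D *\<^sub>v y)"
    using least_squares(1) P by (simp add: w(2) residual_norm_eq[OF P] w0(1) w(1))
  show "y = Wk *\<^sub>v w0" if "vnorm (b - D *\<^sub>v y) \<le> vnorm (b - D *\<^sub>v (Wk *\<^sub>v w0))"
    using least_squares(2) that P by (simp add: w(2) residual_norm_eq[OF P] w0(1) w(1))
qed

lemma solution_in_krylov_if_c2_zero:
  assumes c2: "c2 = 0" and k: "0 < k" and z: "z \<in> carrier_vec k"
    and z_solves: "Tk *\<^sub>v z = complex_of_real (vnorm b) \<cdot>\<^sub>v unit_vec k 0"
  shows "Wk *\<^sub>v z \<in> krylov D b k"
proof -
  have Uz: "Uk *\<^sub>v z \<in> carrier_vec k" by (rule mult_mat_vec_carrier[OF U_carrier z])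
  have Tz: "Tk *\<^sub>v z = complex_of_real c1 \<cdot>\<^sub>v (Uk *\<^sub>v z)"
    using c2 z by (intro eq_vecI) (auto simp: scalar_prod_def sum_distrib_left algebra_simps)
  have c1: "c1 \<noteq> 0"
  proof
    assume "c1 = 0"
    then have "(Tk *\<^sub>v z) $ 0 = 0" using Tz k by simp
    then show False using z_solves k b_nonzero by simp
  qed
  have "Uk *\<^sub>v z = complex_of_real (vnorm b / c1) \<cdot>\<^sub>v unit_vec k 0"
  proof (rule eq_vecI)
    fix i assume "i < dim_vec (complex_of_real (vnorm b / c1) \<cdot>\<^sub>v unit_vec k 0)"
    then have i: "i < k" by simp
    have "complex_of_real c1 * (Uk *\<^sub>v z) $ i = complex_of_real (vnorm b) * unit_vec k 0 $ i"
      using arg_cong[OF z_solves, of "\<lambda>v. v $ i"] i Uz unfolding Tz by simp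
    then show "(Uk *\<^sub>v z) $ i = (complex_of_real (vnorm b / c1) \<cdot>\<^sub>v unit_vec k 0) $ i"
      using i c1 by (simp add: field_simps)
  qed simp
  then have "Wk *\<^sub>v z = complex_of_real (vnorm b / c1) \<cdot>\<^sub>v q 1"
    using z Q_mult_unit_vec[of 0 k] k by (simp add: assoc_mult_mat_vec[of _ n k _ k] mult_mat_vec[OF Q_carrier])
  also have "\<dots> = complex_of_real (1 / c1) \<cdot>\<^sub>v col (K k) 0"
    using K_col[of 0 k] k b_carrier b_nonzero V_carrier by (intro eq_vecI) auto
  also have "\<dots> \<in> mat_range (K k)"
    using k by (intro smult_mem_mat_range[OF K_carrier] col_mem_mat_range[OF K_carrier])
  finally show ?thesis using krylov_eq_mat_range by simp
qed

lemma minimal_residual_update: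
  fixes P Ri :: "complex mat" and z :: "complex vec" and s c :: complex
  defines "R \<equiv> mat k k (\<lambda>(i, j). (P * Tk_ext) $$ (i, j))"
    and "xt \<equiv> Q k *\<^sub>v (Uk *\<^sub>v z)
      - (\<nu> * z $ (k - 1) * s) \<cdot>\<^sub>v (Q k *\<^sub>v (Uk *\<^sub>v (Ri *\<^sub>v unit_vec k (k - 1))))"
  assumes k: "0 < k"
    and P: "P \<in> carrier_mat (Suc k) (Suc k)" "mat_adjoint P * P = 1\<^sub>m (Suc k)"
    and P_last_col: "P *\<^sub>v unit_vec (Suc k) k = s \<cdot>\<^sub>v unit_vec (Suc k) (k - 1) + c \<cdot>\<^sub>v unit_vec (Suc k) k"
    and last_row: "\<And>j. j < k \<Longrightarrow> (P * Tk_ext) $$ (k, j) = 0"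
    and Ri: "Ri \<in> carrier_mat k k" "R * Ri = 1\<^sub>m k" "Ri * R = 1\<^sub>m k"
    and z: "z \<in> carrier_vec k" and z_solves: "Tk *\<^sub>v z = complex_of_real (vnorm b) \<cdot>\<^sub>v unit_vec k 0"
  shows "xt \<in> krylov D b k
    \<and> (\<forall>y \<in> krylov D b k. vnorm (b - D *\<^sub>v xt) \<le> vnorm (b - D *\<^sub>v y))
    \<and> (\<forall>y \<in> krylov D b k. vnorm (b - D *\<^sub>v y) \<le> vnorm (b - D *\<^sub>v xt) \<longrightarrow> y = xt)"
proof -
  let ?g = "vec_first (P *\<^sub>v (complex_of_real (vnorm b) \<cdot>\<^sub>v unit_vec (Suc k) 0)) k"
  define a where "a = \<nu> * z $ (k - 1) * s"
  define e where "e = Ri *\<^sub>v unit_vec k (k - 1)"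
  define w0 where "w0 = z - a \<cdot>\<^sub>v e"
  have R: "R \<in> carrier_mat k k" and e: "e \<in> carrier_vec k" and w0_carrier: "w0 \<in> carrier_vec k"
    unfolding R_def w0_def e_def using z Ri by auto
  have Rz: "R *\<^sub>v z = ?g + a \<cdot>\<^sub>v unit_vec k (k - 1)"
    unfolding R_def a_def
    by (rule upper_block_rotated_mult_vec[OF P(1) k P_last_col Tk_ext_carrier z _
          append_row_mult_vec[OF T_carrier k z z_solves]]) simp
  have "R *\<^sub>v e = unit_vec k (k - 1)"
    unfolding e_def using Ri R by (simp add: assoc_mult_mat_vec[symmetric, of _ k k _ k])
  then have R_w0: "R *\<^sub>v w0 = ?g"
    unfolding w0_def using z e R
    by (simp add: mult_minus_distrib_mat_vec[OF R] mult_mat_vec[OF R] Rz) (auto intro!: eq_vecI)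
  have xt: "xt = Wk *\<^sub>v w0"
  proof -
    have Uz: "Uk *\<^sub>v z \<in> carrier_vec k" and Ue: "Uk *\<^sub>v e \<in> carrier_vec k"
      using mult_mat_vec_carrier[OF U_carrier] z e by auto
    have "Wk *\<^sub>v w0 = Q k *\<^sub>v (Uk *\<^sub>v w0)"
      using w0_carrier by (simp add: assoc_mult_mat_vec[of _ n k _ k])
    also have "Uk *\<^sub>v w0 = Uk *\<^sub>v z - a \<cdot>\<^sub>v (Uk *\<^sub>v e)"
      unfolding w0_def using z e by (simp add: mult_minus_distrib_mat_vec[OF U_carrier] mult_mat_vec[OF U_carrier])
    also have "Q k *\<^sub>v \<dots> = xt"
      unfolding xt_def a_def[symmetric] e_def[symmetric]
      using mult_minus_distrib_mat_vec[OF Q_carrier Uz smult_carrier_vec[THEN iffD2, OF Ue]]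
      by (simp add: mult_mat_vec[OF Q_carrier Ue])
    finally show ?thesis by simp
  qed
  have "xt \<in> krylov D b k"
  proof (cases "c2 = 0")
    case True
    then have "w0 = z" unfolding w0_def a_def using z e by (auto intro!: eq_vecI)
    then show ?thesis using solution_in_krylov_if_c2_zero[OF True k z z_solves] xt by simp
  next
    case False
    have "xt \<in> mat_range Wk" unfolding xt using w0_carrier by (intro mat_rangeI) auto
    then show ?thesis using W_range_subset_krylov[OF False] by auto
  qed
  then show ?thesis
    using unique_minimal_residual[OF P last_row Ri(1) Ri(3)[unfolded R_def] w0_carrier R_w0[unfolded R_def]]
    unfolding xt by blast
qed

end

theorem mainTheorem6:
  fixes n k :: nat and V :: "complex mat" and b :: "complex vec" and c1 c2 :: real
    and z :: "complex vec" and cs :: "nat \<Rightarrow> real" and ss :: "nat \<Rightarrow> complex"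
    and Os :: "nat \<Rightarrow> complex mat"
  assumes V: "V \<in> carrier_mat n n" and V_unitary: "unitary_mat V"
    and b: "b \<in> carrier_vec n"
    and k: "1 \<le> k"
    and nobreak: "ua_no_breakdown V b k"
    and LU: "has_nonsingular_LU (complex_of_real c1 \<cdot>\<^sub>m ua_U V b k + complex_of_real c2 \<cdot>\<^sub>m ua_L V b k)"
    and z: "z \<in> carrier_vec k"
    and z_solves: "(complex_of_real c1 \<cdot>\<^sub>m ua_U V b k + complex_of_real c2 \<cdot>\<^sub>m ua_L V b k) *\<^sub>v z
                   = complex_of_real (vnorm b) \<cdot>\<^sub>v unit_vec k 0"
    and O0: "Os 0 = 1\<^sub>m 1"
    and Orec: "\<And>j. 1 \<le> j \<Longrightarrow> j \<le> k \<Longrightarrow>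
                 Os j = givens_mat j (cs j) (ss j) * four_block_mat (Os (j - 1)) (0\<^sub>m j 1) (0\<^sub>m 1 j) (1\<^sub>m 1)"
    and cs_nonneg: "\<And>j. 1 \<le> j \<Longrightarrow> j \<le> k \<Longrightarrow> cs j \<ge> 0"
    and cs_ss: "\<And>j. 1 \<le> j \<Longrightarrow> j \<le> k \<Longrightarrow> (cs j)^2 + (cmod (ss j))^2 = 1"
    and Ok_unitary: "unitary_mat (Os k)"
    and triang_zero: "\<And>j. j < k \<Longrightarrow>
          (Os k * mat (k + 1) k (\<lambda>(i, j). if i < k
              then (complex_of_real c1 \<cdot>\<^sub>m ua_U V b k + complex_of_real c2 \<cdot>\<^sub>m ua_L V b k) $$ (i, j)
              else if j = k - 1 then complex_of_real (c2 * ua_lsub V b k) else 0)) $$ (k, j) = 0"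
    and R_upper: "upper_triangular (mat k k (\<lambda>(i, j). (Os k * mat (k + 1) k (\<lambda>(i, j). if i < k
              then (complex_of_real c1 \<cdot>\<^sub>m ua_U V b k + complex_of_real c2 \<cdot>\<^sub>m ua_L V b k) $$ (i, j)
              else if j = k - 1 then complex_of_real (c2 * ua_lsub V b k) else 0)) $$ (i, j)))"
    and R_nonsing: "invertible_mat (mat k k (\<lambda>(i, j). (Os k * mat (k + 1) k (\<lambda>(i, j). if i < k
              then (complex_of_real c1 \<cdot>\<^sub>m ua_U V b k + complex_of_real c2 \<cdot>\<^sub>m ua_L V b k) $$ (i, j)
              else if j = k - 1 then complex_of_real (c2 * ua_lsub V b k) else 0)) $$ (i, j)))"
  shows
    "let D = complex_of_real c1 \<cdot>\<^sub>m 1\<^sub>m n + complex_of_real c2 \<cdot>\<^sub>m V;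
         T = complex_of_real c1 \<cdot>\<^sub>m ua_U V b k + complex_of_real c2 \<cdot>\<^sub>m ua_L V b k;
         \<nu> = complex_of_real (c2 * ua_lsub V b k);
         Tt = mat (k + 1) k (\<lambda>(i, j). if i < k then T $$ (i, j) else if j = k - 1 then \<nu> else 0);
         R = mat k k (\<lambda>(i, j). (Os k * Tt) $$ (i, j));
         \<alpha> = z $ (k - 1);
         xk = ua_Q V b k *\<^sub>v (ua_U V b k *\<^sub>v z);
         xt = xk - (\<nu> * \<alpha> * ss k) \<cdot>\<^sub>v (ua_Q V b k *\<^sub>v (ua_U V b k *\<^sub>v (the (mat_inverse R) *\<^sub>v unit_vec k (k - 1))))
     in xt \<in> krylov D b k
        \<and> (\<forall>y \<in> krylov D b k. vnorm (b - D *\<^sub>v xt) \<le> vnorm (b - D *\<^sub>v y))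
        \<and> (\<forall>y \<in> krylov D b k. vnorm (b - D *\<^sub>v y) \<le> vnorm (b - D *\<^sub>v xt) \<longrightarrow> y = xt)"
proof -
  have VV: "mat_adjoint V * V = 1\<^sub>m n" using V_unitary V unfolding unitary_mat_def by auto
  interpret shifted_unitary_arnoldi V b n k c1 c2 using V VV b nobreak by unfold_locales
  define R where "R = mat k k (\<lambda>(i, j). (Os k * Tk_ext) $$ (i, j))"
  have Os_k: "Os k \<in> carrier_mat (Suc k) (Suc k)"
    by (rule givens_recursion_carrier[OF O0 Orec order.refl])
  have Os_k_isometry: "mat_adjoint (Os k) * Os k = 1\<^sub>m (Suc k)"
    using Ok_unitary Os_k unfolding unitary_mat_def by auto
  have Os_k_last_col: "Os k *\<^sub>v unit_vec (Suc k) k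
      = ss k \<cdot>\<^sub>v unit_vec (Suc k) (k - 1) + complex_of_real (cs k) \<cdot>\<^sub>v unit_vec (Suc k) k"
  proof -
    have "Os (k - 1) \<in> carrier_mat k k"
      using givens_recursion_carrier[OF O0 Orec, where j = "k - 1"] k by simp
    then show ?thesis using givens_step_last_col Orec[of k] k by simp
  qed
  have R_carrier: "R \<in> carrier_mat k k" unfolding R_def by simp
  obtain Ri where Ri: "mat_inverse R = Some Ri"
    using mat_inverse_invertible[OF R_carrier] R_nonsing unfolding R_def by blast
  note Ri_inverse = mat_inverse(2)[OF R_carrier Ri]
  show ?thesis
    unfolding Let_def R_def[symmetric] Ri option.sel
    using minimal_residual_update[OF _ Os_k Os_k_isometry Os_k_last_col triang_zero, of Ri z, folded R_def]
      k z z_solves Ri_inverse by simp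
qed

end
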